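(* Let $G=(V,E)$ be a graph and $W$ a vertex cover of $G$. Let $\Omega$ be a potential maximal clique of $G$ having an active separator $S\subseteq\Omega$ with an active pair $x,y\in S$. Let $C$ be the unique connected component of $G-S$ intersecting $\Omega$, and let $D_S$ be the union of all other connected components of $G-S$. Let $D_x$ be the union of those components of $G-\Omega$ that are contained in $C$ and contain a neighbor of $x$, and let $D_y$ be the union of those components of $G-\Omega$ that are contained in $C$ and contain no neighbor of $x$. Put $D_S^W=D_S\cap W$, $D_x^W=D_x\cap W$, $D_y^W=D_y\cap W$. Then at least one of the following holds: (1) there is a vertex $t\in\Omega$ with $\Omega\setminus S=N(t)\cap C$; (2) there is a vertex $t\in\Omega$ with $\Omega=N[t]$; (3) for every vertex $z\notin W$, we have $z\in\Omega$ if and only if either (a) $N(z)$ intersects $D_S^W$ and intersects $D_x^W\cup D_y^W$, or (b) $N(z)$ does not intersect $D_S^W$, but $N(z)$ intersects each of $D_x^W\cup\{x\}$, $D_y^W\cup\{y\}$ and $D_x^W\cup D_y^W$.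
   Context: All graphs are finite, simple and undirected; $N(t)$ is the open neighborhood, $N[t]=N(t)\cup\{t\}$, and for a set $X$, $N(X)=\bigcup_{v\in X}N(v)\setminus X$. A vertex cover is a set of vertices meeting every edge. A minimal separator of $G$ is a set $S$ that is, for some vertices $u,v$, an inclusion-minimal set whose removal puts $u,v$ in different connected components. A graph is chordal if every cycle of length at least 4 has a chord; a minimal triangulation of $G$ is a chordal supergraph $H$ on the same vertex set such that no proper subset of $E(H)$ containing $E(G)$ gives a chordal graph. A set $\Omega\subseteq V$ is a potential maximal clique of $G$ if it is a maximal clique of some minimal triangulation of $G$. (Equivalently: letting $C_1,\dots,C_p$ be the components of $G-\Omega$ and $S_i=N(C_i)$, each $S_i$ is a proper subset of $\Omega$, and any two non-adjacent vertices of $\Omega$ both have neighbors in some common $C_i$; in that case the $S_i$ are exactly the minimal separators of $G$ contained in $\Omega$, and for each such $S_i$ the set $\Omega\setminus S_i$ lies in a unique component of $G-S_i$.) Active separator: let $\Omega$ be a potential maximal clique, $C_1,\dots,C_p$ the components of $G-\Omega$ and $S_i=N(C_i)$. Let $G^+$ be obtained from $G$ by making a clique of every $S_j$ ($2\le j\le p$) with $S_j\not\subseteq S_1$. Then $S_1$ is an active separator for $\Omega$ if $\Omega$ is not a clique of $G^+$, and a pair $x,y\in\Omega$ non-adjacent in $G^+$ is an active pair (necessarily $x,y\in S_1$). $\Omega$ has an active separator if some $S_i$ is active for $\Omega$ (with the roles of indices permuted). *)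

theory Defs
  imports Main
begin

definition graph :: "'a set \<Rightarrow> ('a \<Rightarrow> 'a \<Rightarrow> bool) \<Rightarrow> bool" where
  "graph V adj \<longleftrightarrow> finite V \<and> (\<forall>x y. adj x y \<longrightarrow> adj y x)
     \<and> (\<forall>x. \<not> adj x x) \<and> (\<forall>x y. adj x y \<longrightarrow> x \<in> V \<and> y \<in> V)"

definition nbh :: "'a set \<Rightarrow> ('a \<Rightarrow> 'a \<Rightarrow> bool) \<Rightarrow> 'a \<Rightarrow> 'a set" where
  "nbh V adj v = {u \<in> V. adj v u}"

definition cnbh :: "'a set \<Rightarrow> ('a \<Rightarrow> 'a \<Rightarrow> bool) \<Rightarrow> 'a \<Rightarrow> 'a set" where
  "cnbh V adj v = insert v (nbh V adj v)"

definition setnbh :: "'a set \<Rightarrow> ('a \<Rightarrow> 'a \<Rightarrow> bool) \<Rightarrow> 'a set \<Rightarrow> 'a set" where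
  "setnbh V adj X = (\<Union>v\<in>X. nbh V adj v) - X"

definition vertex_cover :: "'a set \<Rightarrow> ('a \<Rightarrow> 'a \<Rightarrow> bool) \<Rightarrow> 'a set \<Rightarrow> bool" where
  "vertex_cover V adj W \<longleftrightarrow> W \<subseteq> V \<and> (\<forall>x y. adj x y \<longrightarrow> x \<in> W \<or> y \<in> W)"

definition reach_in :: "('a \<Rightarrow> 'a \<Rightarrow> bool) \<Rightarrow> 'a set \<Rightarrow> 'a \<Rightarrow> 'a \<Rightarrow> bool" where
  "reach_in adj A u v \<longleftrightarrow> u \<in> A \<and> (\<lambda>x y. adj x y \<and> x \<in> A \<and> y \<in> A)\<^sup>*\<^sup>* u v"

text \<open>Connected components of the induced subgraph on A (G - X is A = V - X).\<close>
definition components_in :: "('a \<Rightarrow> 'a \<Rightarrow> bool) \<Rightarrow> 'a set \<Rightarrow> 'a set set" where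
  "components_in adj A = {{v. reach_in adj A u v} | u. u \<in> A}"

definition separates :: "'a set \<Rightarrow> ('a \<Rightarrow> 'a \<Rightarrow> bool) \<Rightarrow> 'a set \<Rightarrow> 'a \<Rightarrow> 'a \<Rightarrow> bool" where
  "separates V adj S u v \<longleftrightarrow> u \<in> V - S \<and> v \<in> V - S \<and> \<not> reach_in adj (V - S) u v"

definition minimal_separator :: "'a set \<Rightarrow> ('a \<Rightarrow> 'a \<Rightarrow> bool) \<Rightarrow> 'a set \<Rightarrow> bool" where
  "minimal_separator V adj S \<longleftrightarrow> S \<subseteq> V \<and> (\<exists>u v. separates V adj S u v
      \<and> (\<forall>T. T \<subset> S \<longrightarrow> \<not> separates V adj T u v))"

definition is_cycle :: "('a \<Rightarrow> 'a \<Rightarrow> bool) \<Rightarrow> 'a list \<Rightarrow> bool" where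
  "is_cycle adj vs \<longleftrightarrow> distinct vs \<and> length vs \<ge> 3 \<and>
     (\<forall>i < length vs. adj (vs ! i) (vs ! ((i + 1) mod length vs)))"

definition has_chord :: "('a \<Rightarrow> 'a \<Rightarrow> bool) \<Rightarrow> 'a list \<Rightarrow> bool" where
  "has_chord adj vs \<longleftrightarrow> (\<exists>i j. i < length vs \<and> j < length vs \<and> i \<noteq> j
     \<and> j \<noteq> (i + 1) mod length vs \<and> i \<noteq> (j + 1) mod length vs
     \<and> adj (vs ! i) (vs ! j))"

definition chordal :: "'a set \<Rightarrow> ('a \<Rightarrow> 'a \<Rightarrow> bool) \<Rightarrow> bool" where
  "chordal V adj \<longleftrightarrow> (\<forall>vs. set vs \<subseteq> V \<longrightarrow> is_cycle adj vs \<longrightarrow> length vs \<ge> 4 \<longrightarrow> has_chord adj vs)"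

definition minimal_triangulation :: "'a set \<Rightarrow> ('a \<Rightarrow> 'a \<Rightarrow> bool) \<Rightarrow> ('a \<Rightarrow> 'a \<Rightarrow> bool) \<Rightarrow> bool" where
  "minimal_triangulation V adj h \<longleftrightarrow> graph V h \<and> adj \<le> h \<and> chordal V h
     \<and> (\<forall>f. graph V f \<longrightarrow> adj \<le> f \<longrightarrow> f < h \<longrightarrow> \<not> chordal V f)"

definition is_clique :: "('a \<Rightarrow> 'a \<Rightarrow> bool) \<Rightarrow> 'a set \<Rightarrow> bool" where
  "is_clique adj K \<longleftrightarrow> (\<forall>x\<in>K. \<forall>y\<in>K. x \<noteq> y \<longrightarrow> adj x y)"

definition maximal_clique :: "'a set \<Rightarrow> ('a \<Rightarrow> 'a \<Rightarrow> bool) \<Rightarrow> 'a set \<Rightarrow> bool" where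
  "maximal_clique V adj K \<longleftrightarrow> K \<subseteq> V \<and> is_clique adj K
     \<and> (\<forall>K'. K \<subset> K' \<longrightarrow> K' \<subseteq> V \<longrightarrow> \<not> is_clique adj K')"

definition potential_maximal_clique :: "'a set \<Rightarrow> ('a \<Rightarrow> 'a \<Rightarrow> bool) \<Rightarrow> 'a set \<Rightarrow> bool" where
  "potential_maximal_clique V adj \<Omega> \<longleftrightarrow>
     (\<exists>h. minimal_triangulation V adj h \<and> maximal_clique V h \<Omega>)"

definition gplus :: "'a set \<Rightarrow> ('a \<Rightarrow> 'a \<Rightarrow> bool) \<Rightarrow> 'a set \<Rightarrow> 'a set \<Rightarrow> 'a \<Rightarrow> 'a \<Rightarrow> bool" where
  "gplus V adj \<Omega> S x y \<longleftrightarrow> adj x y \<or> (x \<noteq> y \<and> (\<exists>C' \<in> components_in adj (V - \<Omega>).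
      \<not> setnbh V adj C' \<subseteq> S \<and> x \<in> setnbh V adj C' \<and> y \<in> setnbh V adj C'))"

definition active_separator :: "'a set \<Rightarrow> ('a \<Rightarrow> 'a \<Rightarrow> bool) \<Rightarrow> 'a set \<Rightarrow> 'a set \<Rightarrow> bool" where
  "active_separator V adj \<Omega> S \<longleftrightarrow> potential_maximal_clique V adj \<Omega>
     \<and> (\<exists>C1 \<in> components_in adj (V - \<Omega>). S = setnbh V adj C1)
     \<and> \<not> is_clique (gplus V adj \<Omega> S) \<Omega>"

definition active_pair :: "'a set \<Rightarrow> ('a \<Rightarrow> 'a \<Rightarrow> bool) \<Rightarrow> 'a set \<Rightarrow> 'a set \<Rightarrow> 'a \<Rightarrow> 'a \<Rightarrow> bool" where
  "active_pair V adj \<Omega> S x y \<longleftrightarrow> active_separator V adj \<Omega> S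
     \<and> x \<in> \<Omega> \<and> y \<in> \<Omega> \<and> x \<noteq> y \<and> \<not> gplus V adj \<Omega> S x y"

end

theory Submission
  imports Defs
begin

text \<open>
  The proof sorts every vertex z
  by its position -- in S, in \<Omega> - S, in C - \<Omega>, or outside C \<union> \<Omega> -- and determines in each
  case which of D_S, D_x \<union> {x}, D_y \<union> {y}, D_x \<union> D_y it sees.  The positions inside \<Omega> need the
  completion property of potential maximal cliques: two non-adjacent vertices of \<Omega> both lie in
  N(D) for some component D of G - \<Omega>.  It is derived from the definition: otherwise deleting the
  edge ab from a minimal triangulation H (and keeping only edges inside \<Omega> or inside some D \<union> N(D))
  leaves a chordal graph strictly between G and H.

  The theorem restricts this characterization to vertices outside
  the vertex cover W, whose neighbourhoods lie inside W.
\<close>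

section \<open>Graphs, reachability and components\<close>

lemma graph_sym: "graph V adj \<Longrightarrow> adj u v \<Longrightarrow> adj v u"
  by (auto simp: graph_def)

lemma graph_vertices: "graph V adj \<Longrightarrow> adj u v \<Longrightarrow> u \<in> V \<and> v \<in> V"
  by (auto simp: graph_def)

lemma nbh_iff: "u \<in> nbh V adj v \<longleftrightarrow> u \<in> V \<and> adj v u"
  by (simp add: nbh_def)

lemma setnbh_iff: "v \<in> setnbh V adj D \<longleftrightarrow> v \<in> V \<and> v \<notin> D \<and> (\<exists>d\<in>D. adj d v)"
  unfolding setnbh_def nbh_def by auto

lemma reach_refl: "u \<in> A \<Longrightarrow> reach_in adj A u u"
  by (simp add: reach_in_def)

lemma reach_target: "reach_in adj A u v \<Longrightarrow> v \<in> A"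
  unfolding reach_in_def
proof (elim conjE)
  assume "u \<in> A" and "(\<lambda>x y. adj x y \<and> x \<in> A \<and> y \<in> A)\<^sup>*\<^sup>* u v"
  from this(2) show "v \<in> A" using \<open>u \<in> A\<close> by (induct rule: rtranclp_induct) auto
qed

lemma reach_step: "reach_in adj A u v \<Longrightarrow> adj v w \<Longrightarrow> w \<in> A \<Longrightarrow> reach_in adj A u w"
  using reach_target[of adj A u v] by (auto simp: reach_in_def intro: rtranclp.rtrancl_into_rtrancl)

lemma reach_trans: "reach_in adj A u v \<Longrightarrow> reach_in adj A v w \<Longrightarrow> reach_in adj A u w"
  unfolding reach_in_def by auto

lemma reach_sym:
  assumes "graph V adj" and "reach_in adj A u v"
  shows "reach_in adj A v u"
proof -
  have "(\<lambda>x y. adj x y \<and> x \<in> A \<and> y \<in> A)\<^sup>*\<^sup>* u v" using assms(2) by (simp add: reach_in_def)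
  then have "(\<lambda>x y. adj x y \<and> x \<in> A \<and> y \<in> A)\<^sup>*\<^sup>* v u"
  proof (induct rule: rtranclp_induct)
    case (step y z)
    then have "adj z y \<and> z \<in> A \<and> y \<in> A" using graph_sym[OF assms(1)] by auto
    then show ?case using step(3) by (rule converse_rtranclp_into_rtranclp)
  qed simp
  then show ?thesis using reach_target[OF assms(2)] by (simp add: reach_in_def)
qed

lemma reach_mono: "A \<subseteq> B \<Longrightarrow> reach_in adj A u v \<Longrightarrow> reach_in adj B u v"
  unfolding reach_in_def
proof (elim conjE, intro conjI)
  assume AB: "A \<subseteq> B" and "u \<in> A" and uv: "(\<lambda>x y. adj x y \<and> x \<in> A \<and> y \<in> A)\<^sup>*\<^sup>* u v"
  then show "u \<in> B" by blast
  have "(\<lambda>x y. adj x y \<and> x \<in> A \<and> y \<in> A)\<^sup>*\<^sup>* \<le> (\<lambda>x y. adj x y \<and> x \<in> B \<and> y \<in> B)\<^sup>*\<^sup>*"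
    using AB by (intro rtranclp_mono) auto
  then show "(\<lambda>x y. adj x y \<and> x \<in> B \<and> y \<in> B)\<^sup>*\<^sup>* u v" using uv by blast
qed

lemma reach_exit:
  assumes "reach_in adj A s t" and "s \<in> X" and "t \<notin> X"
  shows "\<exists>p q. p \<in> X \<and> q \<notin> X \<and> p \<in> A \<and> q \<in> A \<and> adj p q"
proof -
  have "(\<lambda>x y. adj x y \<and> x \<in> A \<and> y \<in> A)\<^sup>*\<^sup>* s t" using assms(1) by (simp add: reach_in_def)
  then show ?thesis using assms(3)
  proof (induct rule: rtranclp_induct)
    case (step y z)
    then show ?case by (cases "y \<in> X") auto
  qed (use assms(2) in simp)
qed

lemma component_subset: "D \<in> components_in adj A \<Longrightarrow> D \<subseteq> A"
  unfolding components_in_def using reach_target by fastforce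

lemma component_of: "u \<in> A \<Longrightarrow> {v. reach_in adj A u v} \<in> components_in adj A"
  unfolding components_in_def by auto

lemma component_of_self: "u \<in> A \<Longrightarrow> u \<in> {v. reach_in adj A u v}"
  by (simp add: reach_refl)

lemma component_eq:
  assumes "graph V adj" and "D \<in> components_in adj A" and "u \<in> D"
  shows "D = {v. reach_in adj A u v}"
proof -
  obtain u0 where u0: "D = {v. reach_in adj A u0 v}"
    using assms(2) unfolding components_in_def by blast
  have to_u: "reach_in adj A u0 u" using assms(3) u0 by simp
  have from_u: "reach_in adj A u u0" using reach_sym[OF assms(1) to_u] .
  show ?thesis
  proof (rule set_eqI)
    fix v show "v \<in> D \<longleftrightarrow> v \<in> {v. reach_in adj A u v}"
      using u0 reach_trans[OF to_u, of v] reach_trans[OF from_u, of v] by auto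
  qed
qed

lemma components_disjoint:
  "graph V adj \<Longrightarrow> D1 \<in> components_in adj A \<Longrightarrow> D2 \<in> components_in adj A
    \<Longrightarrow> u \<in> D1 \<Longrightarrow> u \<in> D2 \<Longrightarrow> D1 = D2"
  using component_eq[of V adj D1 A u] component_eq[of V adj D2 A u] by simp

lemma component_connected:
  "graph V adj \<Longrightarrow> D \<in> components_in adj A \<Longrightarrow> u \<in> D \<Longrightarrow> v \<in> D \<Longrightarrow> reach_in adj A u v"
  using component_eq[of V adj D A u] by simp

lemma component_reach_closed:
  "graph V adj \<Longrightarrow> D \<in> components_in adj A \<Longrightarrow> u \<in> D \<Longrightarrow> reach_in adj A u v \<Longrightarrow> v \<in> D"
  using component_eq[of V adj D A u] by simp

lemma component_closed:
  assumes "graph V adj" and "D \<in> components_in adj A" and "u \<in> D" and "v \<in> A" and "adj u v"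
  shows "v \<in> D"
proof -
  have "reach_in adj A u u" using component_subset[OF assms(2)] assms(3) by (blast intro: reach_refl)
  then show ?thesis using reach_step assms component_reach_closed by metis
qed

lemma setnbh_component_subset:
  assumes "graph V adj" and "D \<in> components_in adj (V - X)"
  shows "setnbh V adj D \<subseteq> X"
proof
  fix v assume "v \<in> setnbh V adj D"
  then obtain d where "d \<in> D" "adj d v" "v \<in> V" "v \<notin> D" by (auto simp: setnbh_iff)
  then show "v \<in> X" using component_closed[OF assms, of d v] by blast
qed

lemma component_refines:
  assumes "graph V adj" and "A \<subseteq> B" and "D \<in> components_in adj A" and "D' \<in> components_in adj B"
    and "u \<in> D" and "u \<in> D'"
  shows "D \<subseteq> D'"
proof
  fix v assume "v \<in> D"
  then have "reach_in adj A u v" by (rule component_connected[OF assms(1,3,5)])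
  then have "reach_in adj B u v" by (rule reach_mono[OF assms(2)])
  then show "v \<in> D'" by (rule component_reach_closed[OF assms(1,4,6)])
qed

lemma component_inside_closed:
  assumes "graph V adj" and "D \<in> components_in adj A" and "u \<in> D" and "u \<in> X"
    and "setnbh V adj X \<inter> A = {}"
  shows "D \<subseteq> X"
proof
  fix v assume "v \<in> D"
  show "v \<in> X"
  proof (rule ccontr)
    assume "v \<notin> X"
    have "reach_in adj A u v" using component_connected[OF assms(1,2,3) \<open>v \<in> D\<close>] .
    then obtain p q where pq: "p \<in> X" "q \<notin> X" "q \<in> A" "adj p q"
      using reach_exit[OF _ assms(4) \<open>v \<notin> X\<close>] by blast
    have "q \<in> V" using graph_vertices[OF assms(1) pq(4)] by simp
    then have "q \<in> setnbh V adj X \<inter> A" using pq by (auto simp: setnbh_iff)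
    then show False using assms(5) by blast
  qed
qed

section \<open>Cycles and chords\<close>

text \<open>Rotating a cycle preserves being a cycle and having a chord; this lets a cycle start at a
  prescribed vertex.  The index arithmetic rests on injectivity of i \<mapsto> (m + i) mod n on [0, n).\<close>
lemma mod_add_inj:
  assumes "(x::nat) < n" and "y < n" and "(m + x) mod n = (m + y) mod n"
  shows "x = y"
proof -
  have le: "a = b" if "a < n" "b < n" "a \<le> b" "(m + a) mod n = (m + b) mod n" for a b :: nat
  proof -
    have "n dvd (m + b) - (m + a)" using that mod_eq_dvd_iff_nat[of "m + a" "m + b" n] by simp
    then have "n dvd b - a" by simp
    moreover have "b - a < n" using that by simp
    ultimately have "b - a = 0" by (auto dest: dvd_imp_le)
    then show "a = b" using that(3) by simp
  qed
  show ?thesis using le[of x y] le[of y x] assms by (cases "x \<le> y") auto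
qed

lemma mod_shift_succ: "(m + Suc k mod n) mod n = Suc ((m + k) mod n) mod (n::nat)"
  by (metis add_Suc_right mod_Suc_eq mod_add_right_eq)

lemma cycle_rotate:
  assumes "is_cycle F vs"
  shows "is_cycle F (rotate m vs)"
proof -
  let ?n = "length vs"
  have "?n \<ge> 3" using assms by (simp add: is_cycle_def)
  then have n0: "?n > 0" by linarith
  have "F (rotate m vs ! i) (rotate m vs ! ((i + 1) mod ?n))" if "i < ?n" for i
  proof -
    have "rotate m vs ! i = vs ! ((m + i) mod ?n)"
      and "rotate m vs ! ((i + 1) mod ?n) = vs ! (((m + i) mod ?n + 1) mod ?n)"
      using that n0 by (simp_all add: nth_rotate mod_shift_succ)
    moreover have "(m + i) mod ?n < ?n" using n0 by simp
    ultimately show ?thesis using assms unfolding is_cycle_def by auto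
  qed
  then show ?thesis using assms by (simp add: is_cycle_def)
qed

lemma chord_rotate:
  assumes "is_cycle F vs" and "has_chord F (rotate m vs)"
  shows "has_chord F vs"
proof -
  let ?n = "length vs"
  have "?n \<ge> 3" using assms by (simp add: is_cycle_def)
  then have n0: "?n > 0" by linarith
  obtain i j where ij: "i < ?n" "j < ?n" "i \<noteq> j" "j \<noteq> (i + 1) mod ?n" "i \<noteq> (j + 1) mod ?n"
     "F (rotate m vs ! i) (rotate m vs ! j)" using assms(2) by (auto simp: has_chord_def)
  define i' where "i' = (m + i) mod ?n"
  define j' where "j' = (m + j) mod ?n"
  have succ: "k < ?n \<Longrightarrow> l < ?n \<Longrightarrow> (m + k) mod ?n = ((m + l) mod ?n + 1) mod ?n \<Longrightarrow> k = (l + 1) mod ?n"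
    for k l using mod_add_inj[of k ?n "(l + 1) mod ?n" m] n0 by (simp add: mod_shift_succ)
  have "i' < ?n" "j' < ?n" using n0 by (auto simp: i'_def j'_def)
  moreover have "i' \<noteq> j'" using ij mod_add_inj unfolding i'_def j'_def by blast
  moreover have "j' \<noteq> (i' + 1) mod ?n" "i' \<noteq> (j' + 1) mod ?n"
    using ij succ[of j i] succ[of i j] unfolding i'_def j'_def by auto
  moreover have "F (vs ! i') (vs ! j')" using ij by (simp add: nth_rotate i'_def j'_def)
  ultimately show ?thesis unfolding has_chord_def by blast
qed

text \<open>A cycle of length at least 4 whose vertices are pairwise adjacent, except possibly for the
  single pair {a, b}, has a chord: one of the two diagonals of its first four vertices.\<close>
lemma cycle_in_near_clique_has_chord:
  assumes cyc: "is_cycle F vs" and len: "length vs \<ge> 4"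
    and near: "\<And>s t. s \<in> set vs \<Longrightarrow> t \<in> set vs \<Longrightarrow> s \<noteq> t \<Longrightarrow> {s, t} \<noteq> {a, b} \<Longrightarrow> F s t"
  shows "has_chord F vs"
proof -
  let ?n = "length vs"
  have "distinct vs" using cyc by (simp add: is_cycle_def)
  moreover have ne: "vs \<noteq> []" using len by auto
  ultimately have dist: "vs ! 1 \<noteq> vs ! 0" "vs ! 1 \<noteq> vs ! 2" "vs ! 1 \<noteq> vs ! 3" "vs ! 0 \<noteq> vs ! 2"
    using len by (simp_all add: nth_eq_iff_index_eq)
  have mem: "i < ?n \<Longrightarrow> vs ! i \<in> set vs" for i by simp
  show ?thesis
  proof (cases "{vs ! 0, vs ! 2} = {a, b}")
    case True
    then have "{vs ! 1, vs ! 3} \<noteq> {a, b}" using dist by (auto simp: doubleton_eq_iff)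
    then have "F (vs ! 1) (vs ! 3)" using near mem len dist by simp
    moreover have "(3::nat) \<noteq> 2 mod ?n" and "(1::nat) \<noteq> 4 mod ?n" using len by (auto simp: le_less)
    ultimately show ?thesis unfolding has_chord_def using len
      by (intro exI[of _ 1] exI[of _ 3]) auto
  next
    case False
    then have "F (vs ! 0) (vs ! 2)" using near mem dist len ne by simp
    then show ?thesis unfolding has_chord_def using len
      by (intro exI[of _ 0] exI[of _ 2]) auto
  qed
qed

text \<open>If edges leaving D end in B, B is a clique, and a cycle starting in D visits a vertex
  outside D \<union> B, then the first and the last vertex of the cycle outside D lie in B and are
  joined by a chord.\<close>
lemma cycle_leaving_set_has_chord:
  assumes cyc: "is_cycle F ws"
    and sym: "\<And>s t. F s t \<Longrightarrow> F t s"
    and exit: "\<And>s t. F s t \<Longrightarrow> s \<in> D \<Longrightarrow> t \<notin> D \<Longrightarrow> t \<in> B"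
    and clique: "\<And>s t. s \<in> B \<Longrightarrow> t \<in> B \<Longrightarrow> s \<noteq> t \<Longrightarrow> F s t"
    and start: "ws ! 0 \<in> D" and far: "k < length ws" "ws ! k \<notin> D \<union> B"
  shows "has_chord F ws"
proof -
  let ?n = "length ws"
  have edge: "l < ?n \<Longrightarrow> F (ws ! l) (ws ! ((l + 1) mod ?n))" for l
    using cyc by (simp add: is_cycle_def)
  obtain i where i: "ws ! i \<notin> D" "\<forall>m<i. ws ! m \<in> D"
    using exists_least_iff[of "\<lambda>i. ws ! i \<notin> D"] far(2) by blast
  have "i \<le> k" using i(2) far(2) by (meson UnCI not_le)
  have "i \<noteq> 0" using i(1) start by (cases i) auto
  then have "F (ws ! (i - 1)) (ws ! i)" using edge[of "i - 1"] \<open>i \<le> k\<close> far(1) by simp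
  then have iB: "ws ! i \<in> B" using exit i \<open>i \<noteq> 0\<close> by simp
  then have "i < k" using \<open>i \<le> k\<close> far(2) by (cases "i = k") auto
  define L where "L = {l. l < ?n \<and> ws ! l \<notin> D}"
  have fin: "finite L" and kL: "k \<in> L" using far by (auto simp: L_def)
  define j where "j = Max L"
  have "j \<in> L" using Max_in[OF fin] kL unfolding j_def by blast
  then have j: "j < ?n" "ws ! j \<notin> D" by (auto simp: L_def)
  have "k \<le> j" using Max_ge[OF fin kL] unfolding j_def .
  have after_j: "ws ! ((j + 1) mod ?n) \<in> D"
  proof (cases "j + 1 = ?n")
    case True then show ?thesis using start by simp
  next
    case False
    then have "j + 1 < ?n" using j by simp
    moreover have "j + 1 \<notin> L" using Max_ge[OF fin, of "j + 1"] unfolding j_def by linarith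
    ultimately show ?thesis by (simp add: L_def)
  qed
  have jB: "ws ! j \<in> B" using exit[OF sym[OF edge[OF j(1)]] after_j j(2)] .
  then have "k < j" using \<open>k \<le> j\<close> far(2) by (cases "k = j") auto
  have "ws ! i \<noteq> ws ! j"
    using cyc \<open>i < k\<close> \<open>k < j\<close> j(1) by (simp add: is_cycle_def nth_eq_iff_index_eq)
  then have "F (ws ! i) (ws ! j)" using clique iB jB by blast
  moreover have "j \<noteq> (i + 1) mod ?n" "i \<noteq> (j + 1) mod ?n"
    using \<open>i < k\<close> \<open>k < j\<close> j(1) \<open>i \<noteq> 0\<close> by (auto simp: mod_if)
  ultimately show ?thesis unfolding has_chord_def using \<open>i < k\<close> \<open>k < j\<close> j(1)
    by (intro exI[of _ i] exI[of _ j]) auto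
qed

text \<open>The same for a cycle through some vertex of D, by rotating it to start there.\<close>
lemma cycle_through_set_has_chord:
  assumes cyc: "is_cycle F vs"
    and sym: "\<And>s t. F s t \<Longrightarrow> F t s"
    and exit: "\<And>s t. F s t \<Longrightarrow> s \<in> D \<Longrightarrow> t \<notin> D \<Longrightarrow> t \<in> B"
    and clique: "\<And>s t. s \<in> B \<Longrightarrow> t \<in> B \<Longrightarrow> s \<noteq> t \<Longrightarrow> F s t"
    and inside: "u \<in> set vs" "u \<in> D" and outside: "w \<in> set vs" "w \<notin> D \<union> B"
  shows "has_chord F vs"
proof -
  obtain p where p: "p < length vs" "vs ! p = u" using inside(1) by (metis in_set_conv_nth)
  obtain k where k: "k < length vs" "rotate p vs ! k = w"
    using outside(1) by (metis in_set_conv_nth set_rotate length_rotate)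
  have "vs \<noteq> []" using p(1) by auto
  then have "rotate p vs ! 0 = u" using nth_rotate[of 0 vs p] p by simp
  then have "has_chord F (rotate p vs)"
    using cycle_leaving_set_has_chord[OF cycle_rotate[OF cyc] sym exit clique] k inside outside
    by simp
  then show ?thesis using chord_rotate[OF cyc] by blast
qed

section \<open>The completion property of potential maximal cliques\<close>

definition pruned_triangulation ::
  "'a set \<Rightarrow> ('a \<Rightarrow> 'a \<Rightarrow> bool) \<Rightarrow> ('a \<Rightarrow> 'a \<Rightarrow> bool) \<Rightarrow> 'a set \<Rightarrow> 'a \<Rightarrow> 'a \<Rightarrow> 'a \<Rightarrow> 'a \<Rightarrow> bool"
where
  "pruned_triangulation V adj h \<Omega> a b u v \<longleftrightarrow> h u v \<and> {u, v} \<noteq> {a, b} \<and> ((u \<in> \<Omega> \<and> v \<in> \<Omega>) \<or>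
     (\<exists>D \<in> components_in adj (V - \<Omega>). u \<in> D \<union> setnbh V adj D \<and> v \<in> D \<union> setnbh V adj D))"

lemma pruned_sym:
  "graph V h \<Longrightarrow> pruned_triangulation V adj h \<Omega> a b u v \<Longrightarrow> pruned_triangulation V adj h \<Omega> a b v u"
  unfolding pruned_triangulation_def by (auto simp: insert_commute dest: graph_sym)

lemma pruned_le: "pruned_triangulation V adj h \<Omega> a b u v \<Longrightarrow> h u v"
  unfolding pruned_triangulation_def by simp

lemma pruned_exit:
  assumes g: "graph V adj" and F: "pruned_triangulation V adj h \<Omega> a b s t"
    and D: "D \<in> components_in adj (V - \<Omega>)" and s: "s \<in> D" and t: "t \<notin> D"
  shows "t \<in> setnbh V adj D"
proof -
  have "s \<notin> \<Omega>" using component_subset[OF D] s by blast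
  then obtain D' where D': "D' \<in> components_in adj (V - \<Omega>)"
      "s \<in> D' \<union> setnbh V adj D'" "t \<in> D' \<union> setnbh V adj D'"
    using F unfolding pruned_triangulation_def by blast
  have "s \<in> D'" using D' setnbh_component_subset[OF g D'(1)] \<open>s \<notin> \<Omega>\<close> by blast
  then have "D' = D" using components_disjoint[OF g D'(1) D] s by blast
  then show ?thesis using D' t by blast
qed

lemma pruned_nbh_clique:
  assumes "is_clique h \<Omega>" and g: "graph V adj"
    and NB: "\<forall>D\<in>components_in adj (V - \<Omega>). \<not> (a \<in> setnbh V adj D \<and> b \<in> setnbh V adj D)"
    and D: "D \<in> components_in adj (V - \<Omega>)"
    and uv: "u \<in> setnbh V adj D" "v \<in> setnbh V adj D" "u \<noteq> v"
  shows "pruned_triangulation V adj h \<Omega> a b u v"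
proof -
  have "u \<in> \<Omega>" "v \<in> \<Omega>" using setnbh_component_subset[OF g D] uv by auto
  moreover have "{u, v} \<noteq> {a, b}" using NB D uv by (auto simp: doubleton_eq_iff)
  ultimately show ?thesis using assms(1) uv unfolding pruned_triangulation_def is_clique_def by blast
qed

text \<open>Every edge of G is kept: it lies in \<Omega> or in D \<union> N(D) for the component D of an endpoint.\<close>
lemma adj_le_pruned:
  assumes g: "graph V adj" and le: "adj \<le> h" and ab: "\<not> adj a b" "\<not> adj b a" and e: "adj u v"
  shows "pruned_triangulation V adj h \<Omega> a b u v"
proof -
  have uv: "u \<in> V" "v \<in> V" using graph_vertices[OF g e] by auto
  have closed: "\<exists>D \<in> components_in adj (V - \<Omega>). s \<in> D \<union> setnbh V adj D \<and> t \<in> D \<union> setnbh V adj D"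
    if "adj s t" "s \<in> V" "t \<in> V" "s \<notin> \<Omega>" for s t
  proof -
    define D where "D = {v. reach_in adj (V - \<Omega>) s v}"
    have D: "D \<in> components_in adj (V - \<Omega>)" "s \<in> D"
      using component_of[of s] component_of_self[of s] that unfolding D_def by auto
    have "t \<in> D \<union> setnbh V adj D"
      using component_closed[OF g D(1,2) _ that(1)] that D(2) by (auto simp: setnbh_iff)
    then show ?thesis using D by blast
  qed
  have "(u \<in> \<Omega> \<and> v \<in> \<Omega>) \<or>
      (\<exists>D \<in> components_in adj (V - \<Omega>). u \<in> D \<union> setnbh V adj D \<and> v \<in> D \<union> setnbh V adj D)"
    using closed[of u v] closed[of v u] e graph_sym[OF g e] uv by blast
  moreover have "h u v" using le e by (simp add: le_fun_def)
  moreover have "{u, v} \<noteq> {a, b}" using ab e by (auto simp: doubleton_eq_iff)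
  ultimately show ?thesis unfolding pruned_triangulation_def by blast
qed

lemma pruned_graph:
  "graph V h \<Longrightarrow> graph V (pruned_triangulation V adj h \<Omega> a b)"
  unfolding graph_def pruned_triangulation_def by (auto simp: insert_commute)

text \<open>A long
  cycle inside \<Omega> is handled by the near-clique lemma; a cycle inside some D \<union> N(D) inherits a chord
  of h, which is not ab; a cycle meeting D and leaving D \<union> N(D) has a chord inside N(D).\<close>
lemma pruned_chordal:
  assumes g: "graph V adj" and gh: "graph V h" and ch: "chordal V h"
    and cl: "is_clique h \<Omega>" and ab: "a \<in> \<Omega>" "b \<in> \<Omega>"
    and NB: "\<forall>D\<in>components_in adj (V - \<Omega>). \<not> (a \<in> setnbh V adj D \<and> b \<in> setnbh V adj D)"
  shows "chordal V (pruned_triangulation V adj h \<Omega> a b)"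
  unfolding chordal_def
proof (intro allI impI)
  let ?F = "pruned_triangulation V adj h \<Omega> a b"
  fix vs assume sv: "set vs \<subseteq> V" and cyc: "is_cycle ?F vs" and len: "4 \<le> length vs"
  show "has_chord ?F vs"
  proof (cases "set vs \<subseteq> \<Omega>")
    case True
    then show ?thesis using cycle_in_near_clique_has_chord[OF cyc len] cl
      unfolding is_clique_def pruned_triangulation_def by blast
  next
    case False
    then obtain u where u: "u \<in> set vs" "u \<in> V - \<Omega>" using sv by blast
    define D where "D = {v. reach_in adj (V - \<Omega>) u v}"
    have D: "D \<in> components_in adj (V - \<Omega>)" "u \<in> D"
      using component_of[OF u(2)] component_of_self[OF u(2)] unfolding D_def by auto
    show ?thesis
    proof (cases "set vs \<subseteq> D \<union> setnbh V adj D")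
      case local: True
      have "is_cycle h vs" using cyc pruned_le unfolding is_cycle_def by metis
      then obtain i j where ij: "i < length vs" "j < length vs" "i \<noteq> j"
          "j \<noteq> (i + 1) mod length vs" "i \<noteq> (j + 1) mod length vs" "h (vs ! i) (vs ! j)"
        using ch sv len unfolding chordal_def has_chord_def by blast
      have ends: "vs ! i \<in> D \<union> setnbh V adj D" "vs ! j \<in> D \<union> setnbh V adj D"
        using local nth_mem ij(1,2) by blast+
      moreover have "\<not> (a \<in> D \<union> setnbh V adj D \<and> b \<in> D \<union> setnbh V adj D)"
        using NB D(1) component_subset[OF D(1)] ab by blast
      ultimately have "{vs ! i, vs ! j} \<noteq> {a, b}" by (auto simp: doubleton_eq_iff)
      then have "?F (vs ! i) (vs ! j)" using ij(6) ends D(1) unfolding pruned_triangulation_def by blast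
      then show ?thesis using ij unfolding has_chord_def by blast
    next
      case False
      then obtain w where w: "w \<in> set vs" "w \<notin> D \<union> setnbh V adj D" by blast
      have "\<And>s t. ?F s t \<Longrightarrow> ?F t s" using pruned_sym[OF gh] by blast
      moreover have "\<And>s t. ?F s t \<Longrightarrow> s \<in> D \<Longrightarrow> t \<notin> D \<Longrightarrow> t \<in> setnbh V adj D"
        using pruned_exit[OF g _ D(1)] by blast
      moreover have "\<And>s t. s \<in> setnbh V adj D \<Longrightarrow> t \<in> setnbh V adj D \<Longrightarrow> s \<noteq> t \<Longrightarrow> ?F s t"
        using pruned_nbh_clique[OF cl g NB D(1)] by blast
      ultimately show ?thesis using cycle_through_set_has_chord[OF cyc _ _ _ u(1) D(2) w] by blast
    qed
  qed
qed

text \<open>Otherwise the pruned triangulation without the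
  edge ab is a chordal graph strictly between G and a minimal triangulation.\<close>
theorem pmc_nonadjacent_common_component:
  assumes g: "graph V adj" and pmc: "potential_maximal_clique V adj \<Omega>"
    and ab: "a \<in> \<Omega>" "b \<in> \<Omega>" "a \<noteq> b" "\<not> adj a b"
  shows "\<exists>D\<in>components_in adj (V - \<Omega>). a \<in> setnbh V adj D \<and> b \<in> setnbh V adj D"
proof (rule ccontr)
  assume "\<not> ?thesis"
  then have NB: "\<forall>D\<in>components_in adj (V - \<Omega>). \<not> (a \<in> setnbh V adj D \<and> b \<in> setnbh V adj D)"
    by blast
  obtain h where mt: "minimal_triangulation V adj h" and mc: "maximal_clique V h \<Omega>"
    using pmc unfolding potential_maximal_clique_def by blast
  have gh: "graph V h" and le: "adj \<le> h" and ch: "chordal V h"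
    and min: "\<And>f. graph V f \<Longrightarrow> adj \<le> f \<Longrightarrow> f < h \<Longrightarrow> \<not> chordal V f"
    using mt unfolding minimal_triangulation_def by blast+
  have cl: "is_clique h \<Omega>" using mc unfolding maximal_clique_def by blast
  let ?F = "pruned_triangulation V adj h \<Omega> a b"
  have "\<not> adj b a" using ab(4) graph_sym[OF g] by blast
  then have "adj \<le> ?F" using adj_le_pruned[OF g le ab(4)] by (auto simp: le_fun_def)
  moreover have "?F < h"
  proof -
    have "?F \<le> h" using pruned_le by (auto simp: le_fun_def)
    moreover have "h a b" "\<not> ?F a b" using cl ab unfolding is_clique_def pruned_triangulation_def by auto
    ultimately show ?thesis by (metis less_le)
  qed
  ultimately show False using min pruned_graph[OF gh] pruned_chordal[OF g gh ch cl ab(1,2) NB] by blast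
qed

section \<open>The configuration of the theorem\<close>

locale pmc_separator =
  fixes V :: "'a set" and adj :: "'a \<Rightarrow> 'a \<Rightarrow> bool" and \<Omega> S C1 C :: "'a set"
  assumes graph: "graph V adj"
    and pmc: "potential_maximal_clique V adj \<Omega>"
    and C1: "C1 \<in> components_in adj (V - \<Omega>)"
    and S_eq: "S = setnbh V adj C1"
    and C: "C \<in> components_in adj (V - S)"
    and C_meets_Omega: "C \<inter> \<Omega> \<noteq> {}"
begin

abbreviation N :: "'a \<Rightarrow> 'a set" where "N \<equiv> nbh V adj"

lemma nbh_sym: "u \<in> N v \<Longrightarrow> v \<in> V \<Longrightarrow> v \<in> N u"
  using graph_sym[OF graph] by (simp add: nbh_iff)

lemma Omega_sub_V: "\<Omega> \<subseteq> V"
  using pmc unfolding potential_maximal_clique_def maximal_clique_def by blast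

lemma S_sub_Omega: "S \<subseteq> \<Omega>"
  using setnbh_component_subset[OF graph C1] S_eq by simp

lemma C_sub: "C \<subseteq> V - S"
  using component_subset[OF C] .

lemma completion:
  "a \<in> \<Omega> \<Longrightarrow> b \<in> \<Omega> \<Longrightarrow> a \<noteq> b \<Longrightarrow> \<not> adj a b
    \<Longrightarrow> \<exists>D\<in>components_in adj (V - \<Omega>). a \<in> setnbh V adj D \<and> b \<in> setnbh V adj D"
  using pmc_nonadjacent_common_component[OF graph pmc] by blast

lemma outer_nbh_witness:
  assumes "D \<in> components_in adj (V - \<Omega>)" and "v \<in> setnbh V adj D"
  shows "\<exists>d\<in>D. d \<in> N v"
proof -
  obtain d where "d \<in> D" "adj d v" using assms(2) by (auto simp: setnbh_iff)
  moreover have "d \<in> V" using component_subset[OF assms(1)] \<open>d \<in> D\<close> by blast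
  ultimately show ?thesis using graph_sym[OF graph] by (auto simp: nbh_iff)
qed

lemma outer_nbh_intro:
  assumes "D \<in> components_in adj (V - \<Omega>)" and "v \<in> \<Omega>" and "d \<in> D" and "d \<in> N v"
  shows "v \<in> setnbh V adj D"
proof -
  have "v \<notin> D" using component_subset[OF assms(1)] assms(2) by blast
  moreover have "adj d v" using assms(4) graph_sym[OF graph] by (simp add: nbh_iff)
  ultimately show ?thesis using assms(2,3) Omega_sub_V by (auto simp: setnbh_iff)
qed

lemma outer_component_closed:
  "D \<in> components_in adj (V - \<Omega>) \<Longrightarrow> u \<in> D \<Longrightarrow> v \<in> N u \<Longrightarrow> v \<notin> \<Omega> \<Longrightarrow> v \<in> D"
  using component_closed[OF graph, of D "V - \<Omega>" u v] by (simp add: nbh_iff)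

lemma C_closed: "u \<in> C \<Longrightarrow> v \<in> N u \<Longrightarrow> v \<notin> S \<Longrightarrow> v \<in> C"
  using component_closed[OF graph C, of u v] by (simp add: nbh_iff)

text \<open>Since S \<subseteq> \<Omega>, every component of G - \<Omega> meeting C lies in C.\<close>
lemma outer_component_meeting_C:
  "D \<in> components_in adj (V - \<Omega>) \<Longrightarrow> u \<in> D \<Longrightarrow> u \<in> C \<Longrightarrow> D \<subseteq> C"
  using component_refines[OF graph _ _ C] S_sub_Omega by blast

text \<open>All of \<Omega> outside S lies in C: a vertex t of \<Omega> - S is adjacent to a vertex w of C \<inter> \<Omega>,
  or t and w see a common component of G - \<Omega>, which then lies in C together with t.\<close>
lemma Omega_minus_S_sub_C: "\<Omega> - S \<subseteq> C"
proof
  fix t assume t: "t \<in> \<Omega> - S"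
  obtain w where w: "w \<in> C" "w \<in> \<Omega>" using C_meets_Omega by blast
  show "t \<in> C"
  proof (cases "t = w \<or> adj w t")
    case True
    then show ?thesis using w t C_closed[OF w(1), of t] Omega_sub_V by (auto simp: nbh_iff)
  next
    case False
    then obtain D where D: "D \<in> components_in adj (V - \<Omega>)" "w \<in> setnbh V adj D" "t \<in> setnbh V adj D"
      using completion[of w t] w t by auto
    have DO: "D \<inter> S = {}" using component_subset[OF D(1)] S_sub_Omega by blast
    obtain d1 where d1: "d1 \<in> D" "d1 \<in> N w" using outer_nbh_witness[OF D(1,2)] by blast
    obtain d2 where d2: "d2 \<in> D" "d2 \<in> N t" using outer_nbh_witness[OF D(1,3)] by blast
    have "d1 \<in> C" using C_closed[OF w(1) d1(2)] d1(1) DO by blast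
    then have "d2 \<in> C" using outer_component_meeting_C[OF D(1) d1(1)] d2(1) by blast
    moreover have "t \<in> N d2" using nbh_sym[OF d2(2)] t Omega_sub_V by blast
    ultimately show "t \<in> C" using C_closed t by blast
  qed
qed

lemma outer_component_seeing_core:
  assumes D: "D \<in> components_in adj (V - \<Omega>)" and t: "t \<in> setnbh V adj D" "t \<notin> S"
  shows "D \<subseteq> C"
proof -
  have "t \<in> C" using setnbh_component_subset[OF graph D] t Omega_minus_S_sub_C by blast
  obtain d where d: "d \<in> D" "d \<in> N t" using outer_nbh_witness[OF D t(1)] by blast
  have "d \<notin> S" using component_subset[OF D] d(1) S_sub_Omega by blast
  then have "d \<in> C" using C_closed[OF \<open>t \<in> C\<close> d(2)] by blast
  then show ?thesis using outer_component_meeting_C[OF D d(1)] by blast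
qed

definition DS :: "'a set" where "DS = \<Union>(components_in adj (V - S) - {C})"

lemma DS_nbh_not_in_C:
  assumes u: "u \<in> DS" and v: "v \<in> N u"
  shows "v \<notin> C"
proof
  assume "v \<in> C"
  obtain C' where C': "C' \<in> components_in adj (V - S)" "C' \<noteq> C" "u \<in> C'"
    using u unfolding DS_def by blast
  have "v \<in> V - S" using \<open>v \<in> C\<close> C_sub by blast
  then have "v \<in> C'" using component_closed[OF graph C'(1) C'(3)] v by (simp add: nbh_iff)
  then show False using components_disjoint[OF graph C'(1) C] C'(2) \<open>v \<in> C\<close> by blast
qed

lemma C_vertex_misses_DS: "z \<in> C \<Longrightarrow> N z \<inter> DS = {}"
  using DS_nbh_not_in_C nbh_sym C_sub by blast

lemma outside_in_DS:
  assumes "z \<in> V" and "z \<notin> C" and "z \<notin> \<Omega>"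
  shows "z \<in> DS"
proof -
  have z: "z \<in> V - S" using assms S_sub_Omega by blast
  have "{v. reach_in adj (V - S) z v} \<in> components_in adj (V - S)" using component_of[OF z] .
  moreover have "z \<in> {v. reach_in adj (V - S) z v}" using component_of_self[OF z] .
  ultimately show ?thesis using assms(2) unfolding DS_def by blast
qed

text \<open>A vertex of S = N(C1) has a neighbour in C1; as N(C1) = S, the set C1 is closed in G - S,
  so this neighbour lies outside C, hence in D_S.\<close>
lemma S_vertex_sees_DS:
  assumes z: "z \<in> S"
  shows "N z \<inter> DS \<noteq> {}"
proof -
  obtain c where c: "c \<in> C1" "c \<in> N z" using outer_nbh_witness[OF C1] z S_eq by blast
  have "c \<notin> \<Omega>" using component_subset[OF C1] c(1) by blast
  have "c \<notin> C"
  proof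
    assume "c \<in> C"
    have "setnbh V adj C1 \<inter> (V - S) = {}" using S_eq by blast
    then have "C \<subseteq> C1" using component_inside_closed[OF graph C \<open>c \<in> C\<close> c(1)] by blast
    then show False using C_meets_Omega component_subset[OF C1] by blast
  qed
  then have "c \<in> DS" using outside_in_DS c(2) \<open>c \<notin> \<Omega>\<close> by (simp add: nbh_iff)
  then show ?thesis using c(2) by blast
qed

end

text \<open>An active pair x, y in S: no component of G - \<Omega> whose neighbourhood leaves S sees both x
  and y (otherwise its neighbourhood would be made a clique in G^+).\<close>
locale pmc_active_pair = pmc_separator +
  fixes x y :: 'a
  assumes x_in_S: "x \<in> S" and y_in_S: "y \<in> S"
    and pair_unseen: "\<And>D. D \<in> components_in adj (V - \<Omega>) \<Longrightarrow> x \<in> setnbh V adj D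
      \<Longrightarrow> y \<in> setnbh V adj D \<Longrightarrow> setnbh V adj D \<subseteq> S"
begin

definition Dx :: "'a set" where
  "Dx = \<Union>{D \<in> components_in adj (V - \<Omega>). D \<subseteq> C \<and> D \<inter> N x \<noteq> {}}"

definition Dy :: "'a set" where
  "Dy = \<Union>{D \<in> components_in adj (V - \<Omega>). D \<subseteq> C \<and> D \<inter> N x = {}}"

lemma inner_iff: "u \<in> Dx \<union> Dy \<longleftrightarrow> (\<exists>D\<in>components_in adj (V - \<Omega>). D \<subseteq> C \<and> u \<in> D)"
proof
  assume "u \<in> Dx \<union> Dy"
  then show "\<exists>D\<in>components_in adj (V - \<Omega>). D \<subseteq> C \<and> u \<in> D"
    unfolding Dx_def Dy_def by (elim UnE UnionE CollectE) blast+
next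
  assume "\<exists>D\<in>components_in adj (V - \<Omega>). D \<subseteq> C \<and> u \<in> D"
  then obtain D where D: "D \<in> components_in adj (V - \<Omega>)" "D \<subseteq> C" "u \<in> D" by blast
  show "u \<in> Dx \<union> Dy"
  proof (cases "D \<inter> N x = {}")
    case True
    then have "D \<subseteq> Dy" using D unfolding Dy_def by blast
    then show ?thesis using D(3) by blast
  next
    case False
    then have "D \<subseteq> Dx" using D unfolding Dx_def by blast
    then show ?thesis using D(3) by blast
  qed
qed

lemma inner_sub_C: "Dx \<union> Dy \<subseteq> C"
proof
  fix u assume "u \<in> Dx \<union> Dy"
  then obtain D where "D \<subseteq> C" "u \<in> D" using inner_iff by blast
  then show "u \<in> C" by blast
qed

lemma C_minus_Omega_inner:
  assumes "u \<in> C" and "u \<notin> \<Omega>"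
  shows "u \<in> Dx \<union> Dy"
proof -
  have u: "u \<in> V - \<Omega>" using assms C_sub by blast
  define D where "D = {v. reach_in adj (V - \<Omega>) u v}"
  have D: "D \<in> components_in adj (V - \<Omega>)" "u \<in> D"
    unfolding D_def using component_of[OF u] component_of_self[OF u] by auto
  then show ?thesis using outer_component_meeting_C[OF D assms(1)] inner_iff by blast
qed

text \<open>If z \<in> \<Omega> has no neighbour in D_x \<union> D_y, then z is adjacent to every other vertex t of \<Omega>
  unless both lie in S: a component of G - \<Omega> seen by z and t would lie in C and so give z
  a neighbour in D_x \<union> D_y.\<close>
lemma adjacent_without_inner_nbh:
  assumes "z \<in> \<Omega>" and "t \<in> \<Omega>" and "z \<noteq> t" and "z \<notin> S \<or> t \<notin> S" and "N z \<inter> (Dx \<union> Dy) = {}"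
  shows "adj z t"
proof (rule ccontr)
  assume "\<not> adj z t"
  then obtain D where D: "D \<in> components_in adj (V - \<Omega>)" "z \<in> setnbh V adj D" "t \<in> setnbh V adj D"
    using completion assms(1-3) by blast
  have "D \<subseteq> C" using outer_component_seeing_core[OF D(1)] D(2,3) assms(4) by blast
  moreover obtain d where "d \<in> D" "d \<in> N z" using outer_nbh_witness[OF D(1,2)] by blast
  ultimately show False using inner_iff D(1) assms(5) by blast
qed

text \<open>Failure of alternative (1) of the theorem forces a vertex of S to see D_x \<union> D_y.\<close>
lemma S_vertex_without_inner_nbh:
  assumes z: "z \<in> S" and empty: "N z \<inter> (Dx \<union> Dy) = {}"
  shows "\<Omega> - S = N z \<inter> C"
proof (intro equalityI subsetI)
  fix t assume t: "t \<in> \<Omega> - S"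
  then have "adj z t" using adjacent_without_inner_nbh[OF _ _ _ _ empty] z S_sub_Omega by blast
  then show "t \<in> N z \<inter> C" using t Omega_minus_S_sub_C Omega_sub_V by (auto simp: nbh_iff)
next
  fix u assume u: "u \<in> N z \<inter> C"
  then have "u \<in> \<Omega>" using C_minus_Omega_inner empty by blast
  then show "u \<in> \<Omega> - S" using u C_sub by blast
qed

text \<open>Failure of alternative (2) forces a vertex of \<Omega> - S to see D_x \<union> D_y.\<close>
lemma core_vertex_without_inner_nbh:
  assumes z: "z \<in> \<Omega> - S" and empty: "N z \<inter> (Dx \<union> Dy) = {}"
  shows "\<Omega> = cnbh V adj z"
proof (intro equalityI subsetI)
  fix t assume t: "t \<in> \<Omega>"
  show "t \<in> cnbh V adj z"
  proof (cases "t = z")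
    case False
    then have "adj z t" using adjacent_without_inner_nbh[OF _ t _ _ empty] z by blast
    then show ?thesis using t Omega_sub_V by (auto simp: cnbh_def nbh_iff)
  qed (simp add: cnbh_def)
next
  fix u assume u: "u \<in> cnbh V adj z"
  show "u \<in> \<Omega>"
  proof (cases "u = z \<or> u \<in> S")
    case True then show ?thesis using z S_sub_Omega by blast
  next
    case False
    then have "u \<in> N z" using u by (simp add: cnbh_def)
    moreover have "z \<in> C" using z Omega_minus_S_sub_C by blast
    ultimately have "u \<in> C" using C_closed False by blast
    then show ?thesis using C_minus_Omega_inner \<open>u \<in> N z\<close> empty by blast
  qed
qed

text \<open>A vertex of \<Omega> - S sees x or, through a common component of G - \<Omega> (which lies in C and
  sees x), a vertex of D_x.\<close>
lemma core_vertex_sees_x: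
  assumes z: "z \<in> \<Omega> - S"
  shows "N z \<inter> (Dx \<union> {x}) \<noteq> {}"
proof (cases "adj z x")
  case True
  then show ?thesis using x_in_S S_sub_Omega Omega_sub_V by (auto simp: nbh_iff)
next
  case False
  then obtain D where D: "D \<in> components_in adj (V - \<Omega>)" "z \<in> setnbh V adj D" "x \<in> setnbh V adj D"
    using completion[of z x] z x_in_S S_sub_Omega by blast
  have "D \<subseteq> C" using outer_component_seeing_core[OF D(1,2)] z by blast
  moreover have "D \<inter> N x \<noteq> {}" using outer_nbh_witness[OF D(1,3)] by blast
  ultimately have "D \<subseteq> Dx" using D(1) unfolding Dx_def by blast
  moreover obtain d where "d \<in> D" "d \<in> N z" using outer_nbh_witness[OF D(1,2)] by blast
  ultimately show ?thesis by blast
qed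

text \<open>Symmetrically for y; the common component cannot see x, since its neighbourhood contains
  z \<notin> S and x, y are not both seen by such a component.\<close>
lemma core_vertex_sees_y:
  assumes z: "z \<in> \<Omega> - S"
  shows "N z \<inter> (Dy \<union> {y}) \<noteq> {}"
proof (cases "adj z y")
  case True
  then show ?thesis using y_in_S S_sub_Omega Omega_sub_V by (auto simp: nbh_iff)
next
  case False
  then obtain D where D: "D \<in> components_in adj (V - \<Omega>)" "z \<in> setnbh V adj D" "y \<in> setnbh V adj D"
    using completion[of z y] z y_in_S S_sub_Omega by blast
  have "D \<subseteq> C" using outer_component_seeing_core[OF D(1,2)] z by blast
  moreover have "D \<inter> N x = {}"
  proof (rule ccontr)
    assume "D \<inter> N x \<noteq> {}"
    then have "x \<in> setnbh V adj D" using outer_nbh_intro[OF D(1)] x_in_S S_sub_Omega by blast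
    then show False using pair_unseen[OF D(1) _ D(3)] D(2) z by blast
  qed
  ultimately have "D \<subseteq> Dy" using D(1) unfolding Dy_def by blast
  moreover obtain d where "d \<in> D" "d \<in> N z" using outer_nbh_witness[OF D(1,2)] by blast
  ultimately show ?thesis by blast
qed

text \<open>A vertex z of C - \<Omega> sees only its own component D0 of G - \<Omega> outside \<Omega>.  D0 lies in C,
  and N(D0) is not inside S (else D0 would contain C).  So z cannot see both D_x \<union> {x} and
  D_y \<union> {y}: if D0 misses N(x), z sees neither D_x nor x; otherwise seeing y would put x and y
  into N(D0).\<close>
lemma inner_vertex_not_both:
  assumes zC: "z \<in> C" and zO: "z \<notin> \<Omega>"
  shows "N z \<inter> (Dx \<union> {x}) = {} \<or> N z \<inter> (Dy \<union> {y}) = {}"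
proof -
  have z: "z \<in> V - \<Omega>" using zC zO C_sub by blast
  define D0 where "D0 = {v. reach_in adj (V - \<Omega>) z v}"
  have D0: "D0 \<in> components_in adj (V - \<Omega>)" "z \<in> D0"
    unfolding D0_def using component_of[OF z] component_of_self[OF z] by auto
  have D0_sub: "D0 \<subseteq> C" using outer_component_meeting_C[OF D0 zC] .
  have D0_leaves_S: "\<not> setnbh V adj D0 \<subseteq> S"
  proof
    assume "setnbh V adj D0 \<subseteq> S"
    then have "C \<subseteq> D0" using component_inside_closed[OF graph C zC D0(2)] by blast
    then show False using C_meets_Omega component_subset[OF D0(1)] by blast
  qed
  have own: "D = D0" if "D \<in> components_in adj (V - \<Omega>)" "u \<in> D" "u \<in> N z" for D u
  proof -
    have "u \<notin> \<Omega>" using component_subset[OF that(1)] that(2) by blast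
    then have "u \<in> D0" using outer_component_closed[OF D0 that(3)] by blast
    then show ?thesis using components_disjoint[OF graph that(1) D0(1) that(2)] by blast
  qed
  show ?thesis
  proof (cases "D0 \<inter> N x = {}")
    case True
    have "x \<notin> N z" using nbh_sym[of x z] z True D0(2) by blast
    moreover have "N z \<inter> Dx = {}" using own True unfolding Dx_def by blast
    ultimately show ?thesis by blast
  next
    case False
    have "y \<notin> N z"
    proof
      assume "y \<in> N z"
      then have "y \<in> setnbh V adj D0"
        using outer_nbh_intro[OF D0(1) _ D0(2)] nbh_sym z y_in_S S_sub_Omega by blast
      moreover have "x \<in> setnbh V adj D0"
        using False outer_nbh_intro[OF D0(1)] x_in_S S_sub_Omega by blast
      ultimately show False using pair_unseen[OF D0(1)] D0_leaves_S by blast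
    qed
    moreover have "N z \<inter> Dy = {}" using own False unfolding Dy_def by blast
    ultimately show ?thesis by blast
  qed
qed

lemma DS_vertex_misses_inner: "z \<in> DS \<Longrightarrow> N z \<inter> (Dx \<union> Dy) = {}"
  using DS_nbh_not_in_C inner_sub_C by blast

theorem Omega_characterization:
  assumes no_1: "\<not> (\<exists>t\<in>\<Omega>. \<Omega> - S = N t \<inter> C)" and no_2: "\<not> (\<exists>t\<in>\<Omega>. \<Omega> = cnbh V adj t)"
    and z: "z \<in> V"
  shows "z \<in> \<Omega> \<longleftrightarrow>
    ((N z \<inter> DS \<noteq> {} \<and> N z \<inter> (Dx \<union> Dy) \<noteq> {})
     \<or> (N z \<inter> DS = {} \<and> N z \<inter> (Dx \<union> {x}) \<noteq> {} \<and> N z \<inter> (Dy \<union> {y}) \<noteq> {}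
        \<and> N z \<inter> (Dx \<union> Dy) \<noteq> {}))"
proof -
  consider "z \<in> S" | "z \<in> \<Omega> - S" | "z \<in> C - \<Omega>" | "z \<notin> C \<union> \<Omega>"
    using S_sub_Omega by blast
  then show ?thesis
  proof cases
    case 1
    then have "N z \<inter> (Dx \<union> Dy) \<noteq> {}" using S_vertex_without_inner_nbh no_1 S_sub_Omega by blast
    then show ?thesis using S_vertex_sees_DS 1 S_sub_Omega by blast
  next
    case 2
    then have "N z \<inter> (Dx \<union> Dy) \<noteq> {}" using core_vertex_without_inner_nbh no_2 by blast
    moreover have "N z \<inter> DS = {}" using C_vertex_misses_DS 2 Omega_minus_S_sub_C by blast
    ultimately show ?thesis using core_vertex_sees_x core_vertex_sees_y 2 by blast
  next
    case 3
    then show ?thesis using C_vertex_misses_DS inner_vertex_not_both by blast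
  next
    case 4
    then show ?thesis using DS_vertex_misses_inner outside_in_DS z by blast
  qed
qed

text \<open>The theorem inside the configuration: outside the vertex cover W all neighbours lie in W,
  so intersecting D_S, D_x, D_y with W does not change what such a vertex sees.\<close>
theorem trichotomy:
  assumes cover: "vertex_cover V adj W"
  shows "(\<exists>t\<in>\<Omega>. \<Omega> - S = N t \<inter> C) \<or> (\<exists>t\<in>\<Omega>. \<Omega> = cnbh V adj t) \<or>
      (\<forall>z \<in> V - W. z \<in> \<Omega> \<longleftrightarrow>
        ((N z \<inter> (DS \<inter> W) \<noteq> {} \<and> N z \<inter> (Dx \<inter> W \<union> Dy \<inter> W) \<noteq> {})
         \<or> (N z \<inter> (DS \<inter> W) = {} \<and> N z \<inter> (Dx \<inter> W \<union> {x}) \<noteq> {}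
            \<and> N z \<inter> (Dy \<inter> W \<union> {y}) \<noteq> {} \<and> N z \<inter> (Dx \<inter> W \<union> Dy \<inter> W) \<noteq> {})))"
    (is "?alt1 \<or> ?alt2 \<or> (\<forall>z \<in> V - W. ?member z)")
proof (cases "?alt1 \<or> ?alt2")
  case False
  have "?member z" if z: "z \<in> V - W" for z
  proof -
    have "N z \<subseteq> W" using cover z by (auto simp: vertex_cover_def nbh_def)
    then have "N z \<inter> (DS \<inter> W) = N z \<inter> DS" "N z \<inter> (Dx \<inter> W \<union> Dy \<inter> W) = N z \<inter> (Dx \<union> Dy)"
      "N z \<inter> (Dx \<inter> W \<union> {x}) = N z \<inter> (Dx \<union> {x})" "N z \<inter> (Dy \<inter> W \<union> {y}) = N z \<inter> (Dy \<union> {y})"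
      by blast+
    then show ?thesis using Omega_characterization False z by simp
  qed
  then show ?thesis by blast
qed blast

end

text \<open>The hypotheses give the configuration of the locale: S = N(C1) by activity of S, and a
  component of G - \<Omega> seeing x and y with N(D) \<not>\<subseteq> S would make x, y adjacent in G^+.\<close>
theorem lemma2:
  fixes V :: "'a set" and adj :: "'a \<Rightarrow> 'a \<Rightarrow> bool"
    and W \<Omega> S C :: "'a set" and x y :: 'a
  assumes "graph V adj"
    and "vertex_cover V adj W"
    and "potential_maximal_clique V adj \<Omega>"
    and "active_separator V adj \<Omega> S"
    and "active_pair V adj \<Omega> S x y"
    and "x \<in> S" and "y \<in> S"
    and "C \<in> components_in adj (V - S)" and "C \<inter> \<Omega> \<noteq> {}"
  shows "let N = nbh V adj;
             DS = \<Union>(components_in adj (V - S) - {C});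
             Dx = \<Union>{D \<in> components_in adj (V - \<Omega>). D \<subseteq> C \<and> D \<inter> N x \<noteq> {}};
             Dy = \<Union>{D \<in> components_in adj (V - \<Omega>). D \<subseteq> C \<and> D \<inter> N x = {}};
             DSW = DS \<inter> W; DxW = Dx \<inter> W; DyW = Dy \<inter> W
         in (\<exists>t\<in>\<Omega>. \<Omega> - S = N t \<inter> C)
          \<or> (\<exists>t\<in>\<Omega>. \<Omega> = cnbh V adj t)
          \<or> (\<forall>z \<in> V - W. z \<in> \<Omega> \<longleftrightarrow>
               ((N z \<inter> DSW \<noteq> {} \<and> N z \<inter> (DxW \<union> DyW) \<noteq> {})
                \<or> (N z \<inter> DSW = {} \<and> N z \<inter> (DxW \<union> {x}) \<noteq> {}
                   \<and> N z \<inter> (DyW \<union> {y}) \<noteq> {} \<and> N z \<inter> (DxW \<union> DyW) \<noteq> {})))"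
proof -
  obtain C1 where C1: "C1 \<in> components_in adj (V - \<Omega>)" "S = setnbh V adj C1"
    using assms(4) unfolding active_separator_def by blast
  have unseen: "setnbh V adj D \<subseteq> S" if "D \<in> components_in adj (V - \<Omega>)"
      "x \<in> setnbh V adj D" "y \<in> setnbh V adj D" for D
    using assms(5) that unfolding active_pair_def gplus_def by blast
  interpret pmc_active_pair V adj \<Omega> S C1 C x y
    using assms(1,3,6-9) C1 unseen by unfold_locales auto
  show ?thesis using trichotomy[OF assms(2)] unfolding Let_def DS_def Dx_def Dy_def .
qed

end
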